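(* Let $G$ be any graph and let $C$ be a set of $k$ bicliques of $G$ such that every two of them are mutually included. Then the elements of $C$ can be ordered as $P_1,\dots,P_k$ and their sides named $P_i=X_iY_i$ ($1\le i\le k$) so that $X_1\subsetneq X_2\subsetneq\cdots\subsetneq X_k$ and $Y_k\subsetneq Y_{k-1}\subsetneq\cdots\subsetneq Y_1$.
   Context: All graphs are finite and simple. A biclique of a graph $G$ is a set $P\subseteq V(G)$ such that the induced subgraph $G[P]$ is a complete bipartite graph with both parts nonempty, and $P$ is inclusion-maximal with this property. Since $G[P]$ is connected, its bipartition into two nonempty independent sets $X,Y$ (every vertex of $X$ adjacent to every vertex of $Y$) is unique; we write $P=XY$ to mean $P=X\cup Y$ with $X,Y$ these two parts, called the sides of $P$. Two bicliques $P,Q$ of $G$ are mutually included if their sides can be named $P=X_PY_P$, $Q=X_QY_Q$ so that $X_Q\subsetneq X_P$ and $Y_P\subsetneq Y_Q$. *)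

theory Defs
  imports Main
begin

definition graph :: "'a set \<Rightarrow> ('a \<Rightarrow> 'a \<Rightarrow> bool) \<Rightarrow> bool" where
  "graph V E \<longleftrightarrow> finite V \<and> (\<forall>x y. E x y \<longrightarrow> x \<in> V \<and> y \<in> V)
     \<and> (\<forall>x y. E x y \<longrightarrow> E y x) \<and> (\<forall>x. \<not> E x x)"

definition independent :: "('a \<Rightarrow> 'a \<Rightarrow> bool) \<Rightarrow> 'a set \<Rightarrow> bool" where
  "independent E S \<longleftrightarrow> (\<forall>x\<in>S. \<forall>y\<in>S. \<not> E x y)"

definition complete_bip :: "('a \<Rightarrow> 'a \<Rightarrow> bool) \<Rightarrow> 'a set \<Rightarrow> 'a set \<Rightarrow> bool" where
  "complete_bip E X Y \<longleftrightarrow> X \<noteq> {} \<and> Y \<noteq> {} \<and> X \<inter> Y = {}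
     \<and> independent E X \<and> independent E Y \<and> (\<forall>x\<in>X. \<forall>y\<in>Y. E x y)"

definition induces_complete_bipartite :: "('a \<Rightarrow> 'a \<Rightarrow> bool) \<Rightarrow> 'a set \<Rightarrow> bool" where
  "induces_complete_bipartite E P \<longleftrightarrow> (\<exists>X Y. P = X \<union> Y \<and> complete_bip E X Y)"

definition biclique :: "'a set \<Rightarrow> ('a \<Rightarrow> 'a \<Rightarrow> bool) \<Rightarrow> 'a set \<Rightarrow> bool" where
  "biclique V E P \<longleftrightarrow> P \<subseteq> V \<and> induces_complete_bipartite E P
     \<and> (\<forall>Q. P \<subset> Q \<and> Q \<subseteq> V \<longrightarrow> \<not> induces_complete_bipartite E Q)"

definition sides :: "('a \<Rightarrow> 'a \<Rightarrow> bool) \<Rightarrow> 'a set \<Rightarrow> 'a set \<Rightarrow> 'a set \<Rightarrow> bool" where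
  "sides E P X Y \<longleftrightarrow> P = X \<union> Y \<and> complete_bip E X Y"

definition mutually_included ::
  "('a \<Rightarrow> 'a \<Rightarrow> bool) \<Rightarrow> 'a set \<Rightarrow> 'a set \<Rightarrow> bool" where
  "mutually_included E P Q \<longleftrightarrow> (\<exists>XP YP XQ YQ. sides E P XP YP \<and> sides E Q XQ YQ
     \<and> XQ \<subset> XP \<and> YP \<subset> YQ)"

end

theory Submission
  imports Defs
begin

text \<open>Fix one member \<open>P\<^sub>0 = AB\<close> of the family. Mutual inclusion with \<open>P\<^sub>0\<close> lets us name
  the sides \<open>X\<close>, \<open>Y\<close> of every member so that \<open>X \<subseteq> A, B \<subseteq> Y\<close> or \<open>A \<subseteq> X, Y \<subseteq> B\<close>.
  For two members named this way, the naming witnessing their mutual inclusion cannot be the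
  crossed one: that would put an edge inside a side or make \<open>A\<close> and \<open>B\<close> meet. So any two
  members are comparable by strict inclusion of their \<open>X\<close>-sides, with their \<open>Y\<close>-sides in the
  opposite order, and this finite chain can be enumerated.\<close>

lemma complete_bip_swap:
  assumes "\<forall>x y. E x y \<longrightarrow> E y x" "complete_bip E X Y"
  shows "complete_bip E Y X"
  using assms unfolding complete_bip_def by blast

lemma sides_swap:
  assumes "\<forall>x y. E x y \<longrightarrow> E y x" "sides E P X Y"
  shows "sides E P Y X"
  using assms complete_bip_swap unfolding sides_def by blast

lemma complete_bip_side_eq:
  assumes "\<forall>x y. E x y \<longrightarrow> E y x" "complete_bip E X Y" "x \<in> X"
  shows "X = {v \<in> X \<union> Y. \<not> E x v}"
  using assms unfolding complete_bip_def independent_def by blast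

lemma sides_complement:
  assumes "sides E P X Y"
  shows "Y = P - X"
  using assms unfolding sides_def complete_bip_def by blast

lemma sides_unique:
  assumes sym: "\<forall>x y. E x y \<longrightarrow> E y x" and P: "sides E P X Y" "sides E P X' Y'"
  shows "(X' = X \<and> Y' = Y) \<or> (X' = Y \<and> Y' = X)"
proof -
  have cXY: "complete_bip E X Y" "P = X \<union> Y" and cXY': "complete_bip E X' Y'" "P = X' \<union> Y'"
    using P by (simp_all add: sides_def)
  obtain x where x: "x \<in> X'" using cXY' by (auto simp: complete_bip_def)
  have X': "X' = {v \<in> P. \<not> E x v}"
    using complete_bip_side_eq[OF sym cXY'(1) x] cXY'(2) by simp
  have "X' = X \<or> X' = Y"
  proof (cases "x \<in> X")
    case True
    show ?thesis using complete_bip_side_eq[OF sym cXY(1) True] cXY(2) X' by simp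
  next
    case False
    then have "x \<in> Y" using x cXY(2) cXY'(2) by blast
    from complete_bip_side_eq[OF sym complete_bip_swap[OF sym cXY(1)] this]
    show ?thesis using cXY(2) X' by (simp add: Un_commute)
  qed
  moreover have "Y = P - X" "Y' = P - X'" "X = P - Y"
    using sides_complement[OF P(1)] sides_complement[OF P(2)] sides_complement[OF sides_swap[OF sym P(1)]]
    by simp_all
  ultimately show ?thesis by metis
qed

lemma biclique_sides:
  assumes "biclique V E P"
  obtains X Y where "sides E P X Y"
  using assms unfolding biclique_def induces_complete_bipartite_def sides_def by blast

lemma finite_bicliques:
  assumes "graph V E" "\<forall>P\<in>C. biclique V E P"
  shows "finite C"
  using assms finite_Pow_iff unfolding graph_def biclique_def
  by (metis PowI finite_subset subsetI)

definition aligned :: "'a set \<Rightarrow> 'a set \<Rightarrow> 'a set \<Rightarrow> 'a set \<Rightarrow> bool" where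
  "aligned A B X Y \<longleftrightarrow> (X \<subseteq> A \<and> B \<subseteq> Y) \<or> (A \<subseteq> X \<and> Y \<subseteq> B)"

lemma aligned_swap: "aligned A B X Y \<longleftrightarrow> aligned B A Y X"
  unfolding aligned_def by blast

lemma aligned_not_crossed:
  assumes AB: "complete_bip E A B"
    and Q: "complete_bip E XQ YQ" "aligned A B XQ YQ"
    and R: "complete_bip E XR YR" "aligned A B XR YR"
  shows "\<not> (XQ \<subseteq> YR \<and> XR \<subseteq> YQ)"
proof
  assume cross: "XQ \<subseteq> YR \<and> XR \<subseteq> YQ"
  have disjoint: "A \<inter> B = {}" and nonempty: "A \<noteq> {}" "B \<noteq> {}" "XQ \<noteq> {}" "XR \<noteq> {}"
    using AB Q R by (auto simp: complete_bip_def)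
  from Q(2) R(2) show False unfolding aligned_def
  proof (elim disjE conjE)
    assume "XQ \<subseteq> A" "B \<subseteq> YR"
    moreover obtain a b where "a \<in> XQ" "b \<in> B" using nonempty by blast
    ultimately have "a \<in> YR" "b \<in> YR" "E a b"
      using cross AB by (auto simp: complete_bip_def)
    then show False using R(1) by (auto simp: complete_bip_def independent_def)
  next
    assume "XQ \<subseteq> A" "YR \<subseteq> B"
    then show False using cross disjoint nonempty by blast
  next
    assume "XR \<subseteq> A" "YQ \<subseteq> B"
    then show False using cross disjoint nonempty by blast
  next
    assume "A \<subseteq> XQ" "YR \<subseteq> B"
    then show False using cross disjoint nonempty by blast
  qed
qed

lemma exists_aligned_sides:
  assumes sym: "\<forall>x y. E x y \<longrightarrow> E y x" and AB: "sides E P A B"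
    and "Q = P \<or> mutually_included E P Q"
  shows "\<exists>X Y. sides E Q X Y \<and> aligned A B X Y"
  using assms(3)
proof
  assume "Q = P"
  then show ?thesis using AB by (auto simp: aligned_def)
next
  assume "mutually_included E P Q"
  then obtain XP YP XQ YQ where
    m: "sides E P XP YP" "sides E Q XQ YQ" "XQ \<subset> XP" "YP \<subset> YQ"
    unfolding mutually_included_def by blast
  from sides_unique[OF sym AB m(1)] show ?thesis
  proof
    assume "XP = A \<and> YP = B"
    then show ?thesis using m by (auto simp: aligned_def)
  next
    assume "XP = B \<and> YP = A"
    then show ?thesis using m sides_swap[OF sym m(2)] by (auto simp: aligned_def)
  qed
qed

lemma mutually_included_aligned:
  assumes sym: "\<forall>x y. E x y \<longrightarrow> E y x" and AB: "complete_bip E A B"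
    and Q: "sides E Q XQ YQ" "aligned A B XQ YQ"
    and R: "sides E R XR YR" "aligned A B XR YR"
    and "mutually_included E Q R"
  shows "(XQ \<subset> XR \<and> YR \<subset> YQ) \<or> (XR \<subset> XQ \<and> YQ \<subset> YR)"
proof -
  obtain XQ' YQ' XR' YR' where
    m: "sides E Q XQ' YQ'" "sides E R XR' YR'" "XR' \<subset> XQ'" "YQ' \<subset> YR'"
    using assms(7) unfolding mutually_included_def by blast
  have "\<not> (XQ \<subseteq> YR \<and> XR \<subseteq> YQ)"
    using aligned_not_crossed[OF AB] Q R by (auto simp: sides_def)
  moreover have "\<not> (YQ \<subseteq> XR \<and> YR \<subseteq> XQ)"
    using aligned_not_crossed[OF complete_bip_swap[OF sym AB], of YQ XQ YR XR]
      Q R complete_bip_swap[OF sym] aligned_swap[of A B]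
    by (auto simp: sides_def)
  ultimately show ?thesis
    using sides_unique[OF sym Q(1) m(1)] sides_unique[OF sym R(1) m(2)] m(3,4) by blast
qed

lemma mutually_included_family_sides:
  assumes sym: "\<forall>x y. E x y \<longrightarrow> E y x" and "P0 \<in> C" "sides E P0 A B"
    and mutual: "\<forall>Q\<in>C. \<forall>R\<in>C. Q \<noteq> R \<longrightarrow> mutually_included E Q R"
  obtains X Y where "\<forall>Q\<in>C. sides E Q (X Q) (Y Q)"
    and "\<forall>Q\<in>C. \<forall>R\<in>C. Q \<noteq> R \<longrightarrow> (X Q \<subset> X R \<and> Y R \<subset> Y Q) \<or> (X R \<subset> X Q \<and> Y Q \<subset> Y R)"
proof -
  have "\<forall>Q\<in>C. \<exists>X Y. sides E Q X Y \<and> aligned A B X Y"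
    using exists_aligned_sides[OF sym assms(3)] assms(2) mutual by metis
  then obtain X where "\<forall>Q\<in>C. \<exists>Y. sides E Q (X Q) Y \<and> aligned A B (X Q) Y"
    by (rule bchoice[THEN exE])
  then obtain Y where XY: "\<forall>Q\<in>C. sides E Q (X Q) (Y Q) \<and> aligned A B (X Q) (Y Q)"
    by (rule bchoice[THEN exE])
  have comparable: "(X Q \<subset> X R \<and> Y R \<subset> Y Q) \<or> (X R \<subset> X Q \<and> Y Q \<subset> Y R)"
    if "Q \<in> C" "R \<in> C" "Q \<noteq> R" for Q R
  proof (rule mutually_included_aligned[OF sym])
    show "complete_bip E A B" using assms(3) by (simp add: sides_def)
    show "mutually_included E Q R" using mutual that by blast
  qed (use XY that in blast)+
  show ?thesis
  proof (rule that)
    show "\<forall>Q\<in>C. sides E Q (X Q) (Y Q)" using XY by blast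
    show "\<forall>Q\<in>C. \<forall>R\<in>C. Q \<noteq> R \<longrightarrow> (X Q \<subset> X R \<and> Y R \<subset> Y Q) \<or> (X R \<subset> X Q \<and> Y Q \<subset> Y R)"
      using comparable by blast
  qed
qed

lemma finite_chain_enumeration:
  fixes f :: "'b \<Rightarrow> 'a set"
  assumes "finite C" "card C = k"
    and "\<forall>Q\<in>C. \<forall>R\<in>C. Q \<noteq> R \<longrightarrow> f Q \<subset> f R \<or> f R \<subset> f Q"
  shows "\<exists>P. bij_betw P {1..k} C \<and> (\<forall>i\<in>{1..k}. \<forall>j\<in>{1..k}. i < j \<longrightarrow> f (P i) \<subset> f (P j))"
  using assms
proof (induction k arbitrary: C)
  case 0
  then have "C = {}" by simp
  then show ?case by (simp add: bij_betw_def)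
next
  case (Suc k)
  then have "C \<noteq> {}" by auto
  then obtain M where M: "M \<in> C" "\<forall>R\<in>C. f M \<subseteq> f R \<longrightarrow> f M = f R"
    using finite_has_maximal[of "f ` C"] Suc.prems(1) by (auto simp: Bex_def)
  have top: "f R \<subset> f M" if "R \<in> C - {M}" for R
  proof -
    have "f M \<subset> f R \<or> f R \<subset> f M" using that M(1) Suc.prems(3) by blast
    then show ?thesis using that M(2) by blast
  qed
  have "finite (C - {M})" "card (C - {M}) = k" using Suc.prems(1,2) M(1) by simp_all
  moreover have "\<forall>Q\<in>C - {M}. \<forall>R\<in>C - {M}. Q \<noteq> R \<longrightarrow> f Q \<subset> f R \<or> f R \<subset> f Q"
    using Suc.prems(3) by blast
  ultimately have "\<exists>P. bij_betw P {1..k} (C - {M}) \<and>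
      (\<forall>i\<in>{1..k}. \<forall>j\<in>{1..k}. i < j \<longrightarrow> f (P i) \<subset> f (P j))"
    by (rule Suc.IH)
  then obtain P where P: "bij_betw P {1..k} (C - {M})"
    "\<forall>i\<in>{1..k}. \<forall>j\<in>{1..k}. i < j \<longrightarrow> f (P i) \<subset> f (P j)"
    by blast
  define P' where "P' = P(Suc k := M)"
  have "bij_betw P' {1..k} (C - {M})"
    using P(1) by (rule bij_betw_cong[THEN iffD1, rotated]) (simp add: P'_def)
  then have "bij_betw P' ({1..k} \<union> {Suc k}) ((C - {M}) \<union> {P' (Suc k)})"
    by (rule notIn_Un_bij_betw[rotated 2]) (simp_all add: P'_def)
  moreover have "{1..k} \<union> {Suc k} = {1..Suc k}" "(C - {M}) \<union> {P' (Suc k)} = C"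
    using M(1) by (auto simp: P'_def)
  ultimately have "bij_betw P' {1..Suc k} C" by simp
  moreover have "f (P' i) \<subset> f (P' j)" if "i \<in> {1..Suc k}" "j \<in> {1..Suc k}" "i < j" for i j
  proof (cases "j = Suc k")
    case True
    with that have "P i \<in> C - {M}" using P(1) by (auto simp: bij_betw_def)
    with True that top show ?thesis by (simp add: P'_def)
  next
    case False
    with that P(2) show ?thesis by (simp add: P'_def)
  qed
  ultimately show ?case by blast
qed

lemma finite_opposite_chains_enumeration:
  fixes f g :: "'b \<Rightarrow> 'a set"
  assumes "finite C" "card C = k"
    and comparable: "\<forall>Q\<in>C. \<forall>R\<in>C. Q \<noteq> R \<longrightarrow>
      (f Q \<subset> f R \<and> g R \<subset> g Q) \<or> (f R \<subset> f Q \<and> g Q \<subset> g R)"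
  shows "\<exists>P. bij_betw P {1..k} C
    \<and> (\<forall>i\<in>{1..k}. \<forall>j\<in>{1..k}. i < j \<longrightarrow> f (P i) \<subset> f (P j) \<and> g (P j) \<subset> g (P i))"
proof -
  have "\<forall>Q\<in>C. \<forall>R\<in>C. Q \<noteq> R \<longrightarrow> f Q \<subset> f R \<or> f R \<subset> f Q"
    using comparable by blast
  from finite_chain_enumeration[OF assms(1,2) this]
  obtain P where P: "bij_betw P {1..k} C"
      "\<forall>i\<in>{1..k}. \<forall>j\<in>{1..k}. i < j \<longrightarrow> f (P i) \<subset> f (P j)"
    by blast
  have member: "P i \<in> C" if "i \<in> {1..k}" for i using P(1) that by (auto simp: bij_betw_def)
  have "f (P i) \<subset> f (P j) \<and> g (P j) \<subset> g (P i)"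
    if ij: "i \<in> {1..k}" "j \<in> {1..k}" "i < j" for i j
  proof -
    have "f (P i) \<subset> f (P j)" using P(2) ij by blast
    moreover from this have "P i \<noteq> P j" by auto
    ultimately show ?thesis using comparable member[OF ij(1)] member[OF ij(2)] by blast
  qed
  with P(1) show ?thesis by (intro exI[of _ P]) simp
qed

theorem lemma4:
  fixes V :: "'a set" and E :: "'a \<Rightarrow> 'a \<Rightarrow> bool" and C :: "'a set set" and k :: nat
  assumes "graph V E"
    and "\<forall>P\<in>C. biclique V E P"
    and "card C = k"
    and "\<forall>P\<in>C. \<forall>Q\<in>C. P \<noteq> Q \<longrightarrow> mutually_included E P Q"
  shows "\<exists>P X Y :: nat \<Rightarrow> 'a set.
           bij_betw P {1..k} C
         \<and> (\<forall>i\<in>{1..k}. sides E (P i) (X i) (Y i))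
         \<and> (\<forall>i\<in>{1..k}. \<forall>j\<in>{1..k}. i < j \<longrightarrow> X i \<subset> X j \<and> Y j \<subset> Y i)"
proof (cases "C = {}")
  case True
  then show ?thesis using assms(3) by (auto simp: bij_betw_def)
next
  case False
  have sym: "\<forall>x y. E x y \<longrightarrow> E y x" using assms(1) by (simp add: graph_def)
  obtain P0 where P0: "P0 \<in> C" using False by blast
  with assms(2) have "biclique V E P0" by blast
  then obtain A B where "sides E P0 A B" by (rule biclique_sides)
  with P0 obtain X Y where XY: "\<forall>Q\<in>C. sides E Q (X Q) (Y Q)"
    and comparable: "\<forall>Q\<in>C. \<forall>R\<in>C. Q \<noteq> R \<longrightarrow> (X Q \<subset> X R \<and> Y R \<subset> Y Q) \<or> (X R \<subset> X Q \<and> Y Q \<subset> Y R)"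
    by (rule mutually_included_family_sides[OF sym _ _ assms(4)])
  obtain P where P: "bij_betw P {1..k} C"
      "\<forall>i\<in>{1..k}. \<forall>j\<in>{1..k}. i < j \<longrightarrow> X (P i) \<subset> X (P j) \<and> Y (P j) \<subset> Y (P i)"
    using finite_opposite_chains_enumeration[OF finite_bicliques[OF assms(1,2)] assms(3) comparable]
    by blast
  moreover have "\<forall>i\<in>{1..k}. sides E (P i) (X (P i)) (Y (P i))"
    using P(1) XY by (auto simp: bij_betw_def)
  ultimately show ?thesis
    by (intro exI[of _ P] exI[of _ "\<lambda>i. X (P i)"] exI[of _ "\<lambda>i. Y (P i)"] conjI) simp_all
qed

end
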